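(* Let $k\equiv\pm2,\pm4\pmod{10}$. Then $\operatorname{Ker}\nu_{G^k}=\{M=\begin{pmatrix} a&b\\ c&d\end{pmatrix}\in\Gamma_{\theta,5}: (b,c\in5\mathbb{Z}\text{ and }\tfrac b5\equiv\tfrac c5\pmod5)\text{ or }(a,d\in5\mathbb{Z}\text{ and }\tfrac a5\equiv-\tfrac d5\pmod5)\}$; in particular $\operatorname{Ker}\nu_{G^k}=\operatorname{Ker}\nu_{F^k}$.
   Context: $\Gamma_{\theta,5}=\{M\in SL(2,\mathbb{Z}): M\equiv\pm\begin{pmatrix}1&0\\0&1\end{pmatrix}\text{ or }\pm\begin{pmatrix}0&-1\\1&0\end{pmatrix}\pmod 5\}$. For $M=\begin{pmatrix} a&b\\ c&d\end{pmatrix}\in\Gamma_{\theta,5}$ define $g(M)=\frac{6b}{5}+\frac{2ab}{5}+\frac{2cd}{5}$ if $M\equiv I$, $\frac{24b}{5}+\frac{2ab}{5}+\frac{2cd}{5}$ if $M\equiv -I$, $5+\frac{6d}{5}+\frac{2ab}{5}+\frac{2cd}{5}$ if $M\equiv\begin{pmatrix}0&-1\\1&0\end{pmatrix}$, $5-\frac{6d}{5}+\frac{2ab}{5}+\frac{2cd}{5}$ if $M\equiv\begin{pmatrix}0&1\\-1&0\end{pmatrix}$ (all mod 5), and $f(M)$ by the same case split with values $\frac{4b}{5}+\frac{8ab}{5}+\frac{8cd}{5}$, $\frac{6b}{5}+\frac{8ab}{5}+\frac{8cd}{5}$, $5+\frac{4d}{5}+\frac{8ab}{5}+\frac{8cd}{5}$,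 $5-\frac{4d}{5}+\frac{8ab}{5}+\frac{8cd}{5}$ respectively. For $k\in\mathbb{Z}$, $\nu_{G^k}(M)=\exp(\frac{\pi ik}{5}g(M))$ and $\nu_{F^k}(M)=\exp(\frac{\pi ik}{5}f(M))$; these are the multiplier systems (weight $2k$) of $G^k$ and $F^k$, where $G=\eta^6/\big(\theta\begin{bmatrix}3/5\\3/5\end{bmatrix}\theta\begin{bmatrix}3/5\\7/5\end{bmatrix}\big)$, $F=\eta^6/\big(\theta\begin{bmatrix}1/5\\1/5\end{bmatrix}\theta\begin{bmatrix}1/5\\9/5\end{bmatrix}\big)$, with theta constants $\theta\begin{bmatrix}\epsilon\\ \epsilon'\end{bmatrix}=\sum_{n\in\mathbb{Z}}\exp(2\pi i[\frac12(n+\frac\epsilon2)^2\tau+(n+\frac\epsilon2)\frac{\epsilon'}2])$ and $\eta(\tau)=q^{1/24}\prod_{n\ge1}(1-q^n)$. Kernels are $\{M\in\Gamma_{\theta,5}:\nu(M)=1\}$. *)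

theory Defs
  imports Complex_Main "HOL-Number_Theory.Cong"
begin

text \<open>A matrix (a b; c d) in SL(2,Z) is represented by the quadruple (a,b,c,d).\<close>
type_synonym mat2 = "int \<times> int \<times> int \<times> int"

definition SL2Z :: "mat2 set" where
  "SL2Z = {(a,b,c,d). a*d - b*c = 1}"

definition congI :: "mat2 \<Rightarrow> bool" where
  "congI M = (case M of (a,b,c,d) \<Rightarrow>
     [a = 1] (mod 5) \<and> [b = 0] (mod 5) \<and> [c = 0] (mod 5) \<and> [d = 1] (mod 5))"

definition congmI :: "mat2 \<Rightarrow> bool" where
  "congmI M = (case M of (a,b,c,d) \<Rightarrow>
     [a = -1] (mod 5) \<and> [b = 0] (mod 5) \<and> [c = 0] (mod 5) \<and> [d = -1] (mod 5))"

definition congS :: "mat2 \<Rightarrow> bool" where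
  "congS M = (case M of (a,b,c,d) \<Rightarrow>
     [a = 0] (mod 5) \<and> [b = -1] (mod 5) \<and> [c = 1] (mod 5) \<and> [d = 0] (mod 5))"

definition congmS :: "mat2 \<Rightarrow> bool" where
  "congmS M = (case M of (a,b,c,d) \<Rightarrow>
     [a = 0] (mod 5) \<and> [b = 1] (mod 5) \<and> [c = -1] (mod 5) \<and> [d = 0] (mod 5))"

definition Gamma_theta5 :: "mat2 set" where
  "Gamma_theta5 = {M \<in> SL2Z. congI M \<or> congmI M \<or> congS M \<or> congmS M}"

definition g_fun :: "mat2 \<Rightarrow> real" where
  "g_fun M = (case M of (a,b,c,d) \<Rightarrow>
     let r = 2*a*b/5 + 2*c*d/5 in
     if congI M then 6*b/5 + r
     else if congmI M then 24*b/5 + r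
     else if congS M then 5 + 6*d/5 + r
     else 5 - 6*d/5 + r)"

definition f_fun :: "mat2 \<Rightarrow> real" where
  "f_fun M = (case M of (a,b,c,d) \<Rightarrow>
     let r = 8*a*b/5 + 8*c*d/5 in
     if congI M then 4*b/5 + r
     else if congmI M then 6*b/5 + r
     else if congS M then 5 + 4*d/5 + r
     else 5 - 4*d/5 + r)"

definition nu_G :: "int \<Rightarrow> mat2 \<Rightarrow> complex" where
  "nu_G k M = exp (pi * \<i> * of_int k / 5 * of_real (g_fun M))"

definition nu_F :: "int \<Rightarrow> mat2 \<Rightarrow> complex" where
  "nu_F k M = exp (pi * \<i> * of_int k / 5 * of_real (f_fun M))"

definition ker_nu_G :: "int \<Rightarrow> mat2 set" where
  "ker_nu_G k = {M \<in> Gamma_theta5. nu_G k M = 1}"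

definition ker_nu_F :: "int \<Rightarrow> mat2 set" where
  "ker_nu_F k = {M \<in> Gamma_theta5. nu_F k M = 1}"

end

(*
  Both multipliers have the form exp(pi i k N / 25) with an integer numerator N (5g resp. 5f),
  and for k = 2u with 5 not dividing u this is 1 exactly when 25 divides N.  Writing the entries
  of M as their residue mod 5 plus 5 times an integer, in each of the four classes of
  Gamma_theta,5 one finds N = +-2T resp. N = +-8T (mod 25), where T = b - c if M = +-I and
  T = a + d if M = +-S (mod 5).  As 2 and 8 are units mod 25, both kernels are cut out by
  25 | T, which is the stated condition.
*)
theory Submission
  imports Defs "HOL-Analysis.Complex_Transcendental" "HOL-Computational_Algebra.Primes"
begin

lemma exp_2pi_i_of_int_div_eq_1_iff:
  fixes n m :: int
  assumes "m \<noteq> 0"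
  shows "exp (2 * pi * \<i> * of_int n / of_int m) = 1 \<longleftrightarrow> m dvd n"
proof -
  have "exp (2 * pi * \<i> * of_int n / of_int m) = 1 \<longleftrightarrow>
        (\<exists>j::int. 2 * pi * of_int n / of_int m = of_int (2 * j) * pi)"
    by (simp add: exp_eq_1)
  also have "\<dots> \<longleftrightarrow> (\<exists>j::int. n = m * j)"
  proof -
    have "2 * pi * of_int n / of_int m = of_int (2 * j) * pi \<longleftrightarrow> real_of_int n = of_int (m * j)"
      for j :: int
      using assms pi_gt_zero by (auto simp: field_simps)
    then show ?thesis by (simp only: of_int_eq_iff)
  qed
  finally show ?thesis by (auto simp: dvd_def)
qed

lemma prime_power_dvd_mult_cancel_left:
  fixes p u t :: "'a :: factorial_semiring_gcd"
  assumes "prime p" "\<not> p dvd u"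
  shows "p ^ n dvd u * t \<longleftrightarrow> p ^ n dvd t"
  using prime_imp_power_coprime[OF assms] by (simp add: coprime_commute coprime_dvd_mult_right_iff)

lemma exp_multiplier_eq_1_iff:
  fixes k N :: int
  assumes "even k" "\<not> 5 dvd k"
  shows "exp (pi * \<i> * of_int k / 5 * of_real (of_int N / 5)) = 1 \<longleftrightarrow> 25 dvd N"
proof -
  obtain u where k: "k = 2 * u" using \<open>even k\<close> by blast
  with assms have "\<not> 5 dvd u" by auto
  have "pi * \<i> * of_int k / 5 * of_real (of_int N / 5) = 2 * pi * \<i> * of_int (u * N) / of_int 25"
    by (simp add: k field_simps)
  then have "exp (pi * \<i> * of_int k / 5 * of_real (of_int N / 5)) = 1 \<longleftrightarrow> 25 dvd u * N"
    by (simp only: exp_2pi_i_of_int_div_eq_1_iff)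
  also have "\<dots> \<longleftrightarrow> 5 ^ 2 dvd N"
    using prime_power_dvd_mult_cancel_left[of 5 u 2 N] \<open>\<not> 5 dvd u\<close> by simp
  finally show ?thesis by simp
qed

lemma cong_int_iff_eq_add_mult: "[a = r] (mod m) \<longleftrightarrow> (\<exists>x. a = r + m * x)" for a r m :: int
  by (metis cong_iff_lin cong_sym_eq)

lemma cong_div_iff_sq_dvd_diff:
  fixes m b c :: int
  assumes "m dvd b" "m dvd c"
  shows "[b div m = c div m] (mod m) \<longleftrightarrow> m * m dvd b - c"
proof -
  from assms obtain y z where "b = m * y" "c = m * z" by (auto elim!: dvdE)
  then show ?thesis
    by (cases "m = 0") (auto simp: cong_iff_dvd_diff right_diff_distrib[symmetric])
qed

lemma dvd_25_iff_of_cong_mult: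
  fixes N u T :: int
  assumes "[N = u * T] (mod 25)" "\<not> 5 dvd u"
  shows "25 dvd N \<longleftrightarrow> 25 dvd T"
  using cong_dvd_iff[OF assms(1)] prime_power_dvd_mult_cancel_left[of 5 u 2 T] assms(2) by simp

definition g_numerator :: "mat2 \<Rightarrow> int" where
  "g_numerator M = (case M of (a,b,c,d) \<Rightarrow>
     let r = 2*a*b + 2*c*d in
     if congI M then 6*b + r
     else if congmI M then 24*b + r
     else if congS M then 25 + 6*d + r
     else 25 - 6*d + r)"

definition f_numerator :: "mat2 \<Rightarrow> int" where
  "f_numerator M = (case M of (a,b,c,d) \<Rightarrow>
     let r = 8*a*b + 8*c*d in
     if congI M then 4*b + r
     else if congmI M then 6*b + r
     else if congS M then 25 + 4*d + r
     else 25 - 4*d + r)"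

lemma g_fun_eq: "g_fun M = of_int (g_numerator M) / 5"
  by (cases M) (simp add: g_fun_def g_numerator_def Let_def field_simps)

lemma f_fun_eq: "f_fun M = of_int (f_numerator M) / 5"
  by (cases M) (simp add: f_fun_def f_numerator_def Let_def field_simps)

lemma nu_G_eq_1_iff:
  assumes "even k" "\<not> 5 dvd k"
  shows "nu_G k M = 1 \<longleftrightarrow> 25 dvd g_numerator M"
  unfolding nu_G_def g_fun_eq using exp_multiplier_eq_1_iff[OF assms] .

lemma nu_F_eq_1_iff:
  assumes "even k" "\<not> 5 dvd k"
  shows "nu_F k M = 1 \<longleftrightarrow> 25 dvd f_numerator M"
  unfolding nu_F_def f_fun_eq using exp_multiplier_eq_1_iff[OF assms] .

lemma numerators_cong_congI:
  assumes "congI (a, b, c, d)"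
  shows "[g_numerator (a, b, c, d) = -2 * (b - c)] (mod 25)"
    and "[f_numerator (a, b, c, d) = -8 * (b - c)] (mod 25)"
proof -
  from assms obtain x y z w
    where entries: "a = 1 + 5 * x" "b = 5 * y" "c = 5 * z" "d = 1 + 5 * w"
    by (auto simp: congI_def cong_int_iff_eq_add_mult)
  show "[g_numerator (a, b, c, d) = -2 * (b - c)] (mod 25)"
    using assms by (auto simp: g_numerator_def cong_int_iff_eq_add_mult entries algebra_simps
        intro!: exI[of _ "2 * y + 2 * (x * y + z * w)"])
  show "[f_numerator (a, b, c, d) = -8 * (b - c)] (mod 25)"
    using assms by (auto simp: f_numerator_def cong_int_iff_eq_add_mult entries algebra_simps
        intro!: exI[of _ "4 * y + 8 * (x * y + z * w)"])
qed

lemma numerators_cong_congmI: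
  assumes "congmI (a, b, c, d)"
  shows "[g_numerator (a, b, c, d) = 2 * (b - c)] (mod 25)"
    and "[f_numerator (a, b, c, d) = 8 * (b - c)] (mod 25)"
proof -
  from assms obtain x y z w
    where entries: "a = -1 + 5 * x" "b = 5 * y" "c = 5 * z" "d = -1 + 5 * w"
    by (auto simp: congmI_def cong_int_iff_eq_add_mult)
  have other_class: "\<not> congI (a, b, c, d)"
    using assms by (auto simp: congI_def congmI_def cong_def)
  show "[g_numerator (a, b, c, d) = 2 * (b - c)] (mod 25)"
    using assms other_class by (auto simp: g_numerator_def cong_int_iff_eq_add_mult entries algebra_simps
        intro!: exI[of _ "4 * y + 2 * (x * y + z * w)"])
  show "[f_numerator (a, b, c, d) = 8 * (b - c)] (mod 25)"
    using assms other_class by (auto simp: f_numerator_def cong_int_iff_eq_add_mult entries algebra_simps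
        intro!: exI[of _ "-2 * y + 8 * (x * y + z * w)"])
qed

lemma numerators_cong_congS:
  assumes "congS (a, b, c, d)"
  shows "[g_numerator (a, b, c, d) = -2 * (a + d)] (mod 25)"
    and "[f_numerator (a, b, c, d) = -8 * (a + d)] (mod 25)"
proof -
  from assms obtain x y z w
    where entries: "a = 5 * x" "b = -1 + 5 * y" "c = 1 + 5 * z" "d = 5 * w"
    by (auto simp: congS_def cong_int_iff_eq_add_mult)
  have other_classes: "\<not> congI (a, b, c, d)" "\<not> congmI (a, b, c, d)"
    using assms by (auto simp: congI_def congmI_def congS_def cong_def)
  show "[g_numerator (a, b, c, d) = -2 * (a + d)] (mod 25)"
    using assms other_classes
    by (auto simp: g_numerator_def cong_int_iff_eq_add_mult entries algebra_simps
        intro!: exI[of _ "1 + 2 * w + 2 * (x * y + z * w)"])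
  show "[f_numerator (a, b, c, d) = -8 * (a + d)] (mod 25)"
    using assms other_classes
    by (auto simp: f_numerator_def cong_int_iff_eq_add_mult entries algebra_simps
        intro!: exI[of _ "1 + 4 * w + 8 * (x * y + z * w)"])
qed

lemma numerators_cong_congmS:
  assumes "congmS (a, b, c, d)"
  shows "[g_numerator (a, b, c, d) = 2 * (a + d)] (mod 25)"
    and "[f_numerator (a, b, c, d) = 8 * (a + d)] (mod 25)"
proof -
  from assms obtain x y z w
    where entries: "a = 5 * x" "b = 1 + 5 * y" "c = -1 + 5 * z" "d = 5 * w"
    by (auto simp: congmS_def cong_int_iff_eq_add_mult)
  have other_classes: "\<not> congI (a, b, c, d)" "\<not> congmI (a, b, c, d)" "\<not> congS (a, b, c, d)"
    using assms by (auto simp: congI_def congmI_def congS_def congmS_def cong_def)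
  show "[g_numerator (a, b, c, d) = 2 * (a + d)] (mod 25)"
    using assms other_classes
    by (auto simp: g_numerator_def cong_int_iff_eq_add_mult entries algebra_simps
        intro!: exI[of _ "1 - 2 * w + 2 * (x * y + z * w)"])
  show "[f_numerator (a, b, c, d) = 8 * (a + d)] (mod 25)"
    using assms other_classes
    by (auto simp: f_numerator_def cong_int_iff_eq_add_mult entries algebra_simps
        intro!: exI[of _ "1 - 4 * w + 8 * (x * y + z * w)"])
qed

definition kernel_condition :: "int \<Rightarrow> int \<Rightarrow> int \<Rightarrow> int \<Rightarrow> bool" where
  "kernel_condition a b c d \<longleftrightarrow>
     (5 dvd b \<and> 5 dvd c \<and> [b div 5 = c div 5] (mod 5)) \<or>
     (5 dvd a \<and> 5 dvd d \<and> [a div 5 = - (d div 5)] (mod 5))"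

lemma kernel_condition_congI_congmI:
  assumes "congI (a, b, c, d) \<or> congmI (a, b, c, d)"
  shows "kernel_condition a b c d \<longleftrightarrow> 25 dvd b - c"
proof -
  from assms have "5 dvd b" "5 dvd c" "\<not> 5 dvd a"
    by (auto simp: congI_def congmI_def cong_def dvd_eq_mod_eq_0)
  then show ?thesis
    using cong_div_iff_sq_dvd_diff[of 5 b c] by (simp add: kernel_condition_def)
qed

lemma kernel_condition_congS_congmS:
  assumes "congS (a, b, c, d) \<or> congmS (a, b, c, d)"
  shows "kernel_condition a b c d \<longleftrightarrow> 25 dvd a + d"
proof -
  from assms have "5 dvd a" "5 dvd d" "\<not> 5 dvd b"
    by (auto simp: congS_def congmS_def cong_def dvd_eq_mod_eq_0)
  moreover from \<open>5 dvd d\<close> have "- (d div 5) = - d div 5"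
    by auto
  ultimately show ?thesis
    using cong_div_iff_sq_dvd_diff[of 5 a "- d"] by (simp add: kernel_condition_def)
qed

lemma numerators_dvd_iff_kernel_condition:
  assumes "(a, b, c, d) \<in> Gamma_theta5"
  shows "25 dvd g_numerator (a, b, c, d) \<longleftrightarrow> kernel_condition a b c d"
    and "25 dvd f_numerator (a, b, c, d) \<longleftrightarrow> kernel_condition a b c d"
proof -
  from assms consider (I) "congI (a, b, c, d)" | (mI) "congmI (a, b, c, d)"
    | (S) "congS (a, b, c, d)" | (mS) "congmS (a, b, c, d)"
    unfolding Gamma_theta5_def by blast
  then obtain T u v :: int
    where "[g_numerator (a, b, c, d) = u * T] (mod 25)" "\<not> 5 dvd u"
      and "[f_numerator (a, b, c, d) = v * T] (mod 25)" "\<not> 5 dvd v"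
      and "kernel_condition a b c d \<longleftrightarrow> 25 dvd T"
  proof cases
    case I
    then show ?thesis
      using that[of "-2" "b - c" "-8"] numerators_cong_congI kernel_condition_congI_congmI by simp
  next
    case mI
    then show ?thesis
      using that[of 2 "b - c" 8] numerators_cong_congmI kernel_condition_congI_congmI by simp
  next
    case S
    then show ?thesis
      using that[of "-2" "a + d" "-8"] numerators_cong_congS kernel_condition_congS_congmS by simp
  next
    case mS
    then show ?thesis
      using that[of 2 "a + d" 8] numerators_cong_congmS kernel_condition_congS_congmS by simp
  qed
  then show "25 dvd g_numerator (a, b, c, d) \<longleftrightarrow> kernel_condition a b c d"
    and "25 dvd f_numerator (a, b, c, d) \<longleftrightarrow> kernel_condition a b c d"
    by (simp_all add: dvd_25_iff_of_cong_mult)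
qed

theorem mainTheorem12:
  fixes k :: int
  assumes "k mod 10 \<in> {2, 4, 6, 8}"
  shows "ker_nu_G k = {(a,b,c,d) \<in> Gamma_theta5.
            (5 dvd b \<and> 5 dvd c \<and> [b div 5 = c div 5] (mod 5)) \<or>
            (5 dvd a \<and> 5 dvd d \<and> [a div 5 = - (d div 5)] (mod 5))}
       \<and> ker_nu_G k = ker_nu_F k"
proof -
  from assms have k: "even k" "\<not> 5 dvd k"
    by auto presburger+
  have "ker_nu_G k = {(a, b, c, d) \<in> Gamma_theta5. kernel_condition a b c d}"
    by (auto simp: ker_nu_G_def nu_G_eq_1_iff[OF k] numerators_dvd_iff_kernel_condition)
  moreover have "ker_nu_F k = {(a, b, c, d) \<in> Gamma_theta5. kernel_condition a b c d}"
    by (auto simp: ker_nu_F_def nu_F_eq_1_iff[OF k] numerators_dvd_iff_kernel_condition)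
  ultimately show ?thesis
    by (simp add: kernel_condition_def)
qed

end
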